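(* Let $k\geq 3$ and let $n=4k-3$ be the number of vertices of the basket graph $\mathsf{B}_k$, with distance matrix $D$. Then there exists $\vec x\in\mathbb{R}^n$ such that $$\vec 1^\top\vec x=1,\qquad D\vec x=\frac{(-3)^k+4k-1}{8}\,\vec 1.$$
   Context: For a connected graph $G$ on vertices $v_1,\dots,v_n$, its distance matrix is $D=(d(v_i,v_j))_{i,j=1}^n$, where $d$ is the shortest-path distance; $\vec 1$ denotes the all-ones vector. Basket graph: for $k\geq1$, take disjoint copies of the path graphs $\mathsf{P}_k,\mathsf{P}_{k+1},\mathsf{P}_{k+1},\mathsf{P}_{k+1}$ ($\mathsf{P}_m$ is the path on $m$ vertices), and identify all four first endpoints into one vertex and all four last endpoints into another vertex (creating two vertices of degree four); the result is the $k$-th basket graph $\mathsf{B}_k$, with $4k-3$ vertices. *)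

theory Defs
  imports Complex_Main
begin

definition path_edges_adj :: "nat list list \<Rightarrow> nat \<Rightarrow> nat \<Rightarrow> bool" where
  "path_edges_adj ps u v \<longleftrightarrow>
     (\<exists>p \<in> set ps. \<exists>i. Suc i < length p \<and>
        ((p ! i = u \<and> p ! Suc i = v) \<or> (p ! i = v \<and> p ! Suc i = u)))"

definition graph_dist :: "('a \<Rightarrow> 'a \<Rightarrow> bool) \<Rightarrow> 'a \<Rightarrow> 'a \<Rightarrow> nat" where
  "graph_dist E u v = (LEAST m. (E ^^ m) u v)"

text \<open>Basket graph B_k on vertex set {0..<4k-3}: vertex 0 and vertex 1 are the two
  identified endpoints; the path P_k is 0,2,3,...,k-1,1; the three paths P_(k+1) are
  0, s, s+1, ..., s+k-2, 1 with s = k + j(k-1), j = 0,1,2.\<close>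
definition basket_paths :: "nat \<Rightarrow> nat list list" where
  "basket_paths k =
     ([0] @ [2..<k] @ [1]) #
     map (\<lambda>j. [0] @ [k + j*(k-1) ..< k + (j+1)*(k-1)] @ [1]) [0..<3]"

definition basket_adj :: "nat \<Rightarrow> nat \<Rightarrow> nat \<Rightarrow> bool" where
  "basket_adj k = path_edges_adj (basket_paths k)"

definition basket_n :: "nat \<Rightarrow> nat" where
  "basket_n k = 4*k - 3"

definition basket_D :: "nat \<Rightarrow> nat \<Rightarrow> nat \<Rightarrow> real" where
  "basket_D k i j = real (graph_dist (basket_adj k) i j)"

end

theory Submission
  imports Defs
begin

(* Write K = k - 1.  A vertex of B_k is addressed by the path t it lies on (t = 0 for P_k, t = 1, 2, 3
   for the copies of P_(k+1)) and its position i on that path, the two hubs being read off path 0.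
   The distance of two vertices is |i - j| on a common path and otherwise the shorter of the two routes
   through a hub; this is certified by explicit walks and by the fact that the formula changes by at
   most 1 along every edge.
   The vector x has weight ((-3)^i + (-3)^(K-i))/2 at position i of P_k and ((-3)^(i-1) + (-3)^(K-i))/2
   at position i of the longer paths.  Since x is symmetric under the automorphism exchanging the hubs,
   every entry of D x splits into sums of |c - b| (-3)^b and of min (c + b + e) (2K - c - b) (-3)^b;
   their summands are piecewise linear in b times (-3)^b, so they have closed forms, in which all
   dependence on the row cancels. *)

definition absdiff :: "nat \<Rightarrow> nat \<Rightarrow> nat" where
  "absdiff i j = (i - j) + (j - i)"

lemma of_nat_absdiff [simp]: "real (absdiff i j) = \<bar>real i - real j\<bar>"
  by (cases "i \<le> j") (simp_all add: absdiff_def of_nat_diff)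

lemma graph_dist_eqI:
  fixes f :: "'a \<Rightarrow> nat"
  assumes "f u = 0" and lipschitz: "\<And>y z. E y z \<Longrightarrow> f z \<le> Suc (f y)" and "(E ^^ f v) u v"
  shows "graph_dist E u v = f v"
  unfolding graph_dist_def
proof (rule Least_equality)
  show "(E ^^ f v) u v" by fact
  have "f w \<le> m" if "(E ^^ m) u w" for m w
    using that
  proof (induction m arbitrary: w)
    case 0
    then show ?case using \<open>f u = 0\<close> by simp
  next
    case (Suc m)
    then obtain y where "(E ^^ m) u y" "E y w" by (blast elim: relpowp_Suc_E)
    then show ?case using Suc.IH lipschitz by fastforce
  qed
  then show "\<And>m. (E ^^ m) u v \<Longrightarrow> f v \<le> m" .
qed

lemma path_edges_adj_relpowp_nth:
  assumes "p \<in> set ps" "i < length p" "j < length p"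
  shows "(path_edges_adj ps ^^ absdiff i j) (p ! i) (p ! j)"
proof -
  have walk: "(path_edges_adj ps ^^ d) (p ! i) (p ! (i + d)) \<and> (path_edges_adj ps ^^ d) (p ! (i + d)) (p ! i)"
    if "i + d < length p" for i d
    using that
  proof (induction d)
    case 0
    then show ?case by simp
  next
    case (Suc d)
    have "path_edges_adj ps (p ! (i + d)) (p ! Suc (i + d))"
         "path_edges_adj ps (p ! Suc (i + d)) (p ! (i + d))"
      using Suc.prems assms(1) unfolding path_edges_adj_def by fastforce+
    with Suc show ?case using relpowp_Suc_I relpowp_Suc_I2 by (simp del: relpowp.simps) fast
  qed
  show ?thesis
  proof (cases "i \<le> j")
    case True
    then show ?thesis using walk[of i "j - i"] assms by (simp add: absdiff_def)
  next
    case False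
    then show ?thesis using walk[of j "i - j"] assms by (simp add: absdiff_def)
  qed
qed

lemma sum_piecewise_linear_mult_power:
  fixes x u v u' v' :: "'a :: comm_ring_1"
  assumes "m \<le> N"
    and "\<And>b. b < m \<Longrightarrow> f b = u + v * of_nat b"
    and "\<And>b. m \<le> b \<Longrightarrow> b < N \<Longrightarrow> f b = u' + v' * of_nat b"
  shows "(\<Sum>b<N. f b * x ^ b) =
           (u - u') * (\<Sum>b<m. x ^ b) + (v - v') * (\<Sum>b<m. of_nat b * x ^ b)
         + u' * (\<Sum>b<N. x ^ b) + v' * (\<Sum>b<N. of_nat b * x ^ b)"
proof -
  have "(\<Sum>b<N. f b * x ^ b) = (\<Sum>b<N. (u' + v' * of_nat b) * x ^ b)
          + (\<Sum>b<N. (if b < m then (u - u') + (v - v') * of_nat b else 0) * x ^ b)"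
    unfolding sum.distrib[symmetric]
    by (rule sum.cong) (use assms in \<open>auto simp: algebra_simps\<close>)
  also have "(\<Sum>b<N. (if b < m then (u - u') + (v - v') * of_nat b else 0) * x ^ b)
           = (\<Sum>b<m. ((u - u') + (v - v') * of_nat b) * x ^ b)"
    using assms(1) by (intro sum.mono_neutral_cong_right) auto
  finally show ?thesis
    by (simp add: algebra_simps sum.distrib sum_subtractf sum_distrib_left)
qed

lemma sum_of_nat_mult_neg3_power:
  "(\<Sum>b<n. of_nat b * (-3::real) ^ b) = (-3 - (4 * of_nat n - 3) * (-3) ^ n) / 16"
  by (induction n) (simp_all add: field_simps)

lemma sum_neg3_power: "(\<Sum>b<n. (-3::real) ^ b) = (1 - (-3) ^ n) / 4"
  by (simp add: sum_gp_strict)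

lemma sum_mult_symmetrized_power:
  fixes x :: "'a :: field"
  assumes "\<And>b. b < N \<Longrightarrow> f (N - Suc b) = g b"
  shows "(\<Sum>b<N. f b * ((x ^ b + x ^ (N - Suc b)) / 2))
           = ((\<Sum>b<N. f b * x ^ b) + (\<Sum>b<N. g b * x ^ b)) / 2"
proof -
  have "(\<Sum>b<N. f b * x ^ (N - Suc b)) = (\<Sum>b<N. f (N - Suc b) * x ^ (N - Suc (N - Suc b)))"
    by (rule sum.nat_diff_reindex[symmetric])
  also have "\<dots> = (\<Sum>b<N. g b * x ^ b)"
    using assms by (intro sum.cong) (auto simp: Suc_diff_Suc)
  finally have "(\<Sum>b<N. f b * x ^ (N - Suc b)) = (\<Sum>b<N. g b * x ^ b)" .
  moreover have "(\<Sum>b<N. f b * ((x ^ b + x ^ (N - Suc b)) / 2))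
      = ((\<Sum>b<N. f b * x ^ b) + (\<Sum>b<N. f b * x ^ (N - Suc b))) / 2"
    by (simp add: sum_divide_distrib[symmetric] sum.distrib[symmetric] distrib_left)
  ultimately show ?thesis by simp
qed

definition tent_sum :: "nat \<Rightarrow> nat \<Rightarrow> real" where
  "tent_sum N c = (\<Sum>b<N. real (absdiff c b) * (-3) ^ b)"

definition roof_sum :: "nat \<Rightarrow> nat \<Rightarrow> nat \<Rightarrow> nat \<Rightarrow> real" where
  "roof_sum K N c e = (\<Sum>b<N. real (min (c + b + e) (2 * K - c - b)) * (-3) ^ b)"

lemma tent_sum_eq:
  assumes "c \<le> N"
  shows "tent_sum N c = (4 * real c + 3 - 6 * (-3) ^ c + (4 * real c - 4 * real N + 3) * (-3) ^ N) / 16"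
  unfolding tent_sum_def
  by (subst sum_piecewise_linear_mult_power[where m = c and u = "real c" and v = "-1" and u' = "- real c" and v' = 1])
     (use assms in \<open>auto simp: sum_neg3_power sum_of_nat_mult_neg3_power field_simps\<close>)

lemma roof_sum_eq:
  assumes "c \<le> K" "K - c \<le> N" "N \<le> Suc K" "e \<in> {1, 2}"
  shows "roof_sum K N c e = (4 * real (c + e) - 3 + (6 - 4 * real e) * (-3) ^ (K - c)
                            + (4 * real N + 4 * real c - 8 * real K - 3) * (-3) ^ N) / 16"
  unfolding roof_sum_def
  by (subst sum_piecewise_linear_mult_power[where m = "K - c" and u = "real (c + e)" and v = 1
        and u' = "2 * real K - real c" and v' = "-1"])
     (use assms in \<open>auto simp: sum_neg3_power sum_of_nat_mult_neg3_power field_simps of_nat_diff\<close>)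

definition basket_end :: "nat \<Rightarrow> nat \<Rightarrow> nat" where
  "basket_end K t = (if t = 0 then K else Suc K)"

definition basket_path :: "nat \<Rightarrow> nat \<Rightarrow> nat list" where
  "basket_path K t = [0] @ (if t = 0 then [2..<Suc K] else [Suc (t * K)..<Suc (t * K + K)]) @ [1]"

lemma set_basket_paths: "set (basket_paths (Suc K)) = basket_path K ` {..3}"
proof -
  have "basket_paths (Suc K) = basket_path K 0 # map (\<lambda>j. basket_path K (Suc j)) [0..<3]"
    unfolding basket_paths_def by (auto simp: basket_path_def algebra_simps)
  moreover have "{..3} = insert 0 (Suc ` {..<3})"
    by (simp add: lessThan_Suc_eq_insert_0[symmetric] lessThan_Suc_atMost[symmetric] eval_nat_numeral)
  ultimately show ?thesis by (simp add: image_image atLeast0LessThan)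
qed

lemma length_basket_path: "K \<ge> 1 \<Longrightarrow> length (basket_path K t) = Suc (basket_end K t)"
  by (simp add: basket_path_def basket_end_def) linarith

lemma nth_basket_path:
  assumes "K \<ge> 1" "i \<le> basket_end K t"
  shows "basket_path K t ! i =
           (if i = 0 then 0 else if i = basket_end K t then 1 else if t = 0 then Suc i else t * K + i)"
  using assms by (auto simp: basket_path_def basket_end_def nth_append)

(* Inverse of the numbering in basket_paths: vertex i + 1 (0 < i < K) is position i on path 0, and
   vertex t * K + i (0 < i \<le> K) is position i on path t > 0. *)
definition basket_coord :: "nat \<Rightarrow> nat \<Rightarrow> nat \<times> nat" where
  "basket_coord K v =
     (if v = 0 then (0, 0) else if v = 1 then (0, K) else if v \<le> K then (0, v - 1)
      else ((v - 1) div K, Suc ((v - 1) mod K)))"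

definition basket_coords :: "nat \<Rightarrow> (nat \<times> nat) set" where
  "basket_coords K = {0} \<times> {..K} \<union> {1, 2, 3} \<times> {1..K}"

lemma basket_coord_mult_add:
  assumes "0 < i" "i \<le> K" "0 < t"
  shows "basket_coord K (t * K + i) = (t, i)"
proof -
  obtain i' where i': "i = Suc i'" using assms(1) gr0_implies_Suc by blast
  then have "(t * K + i - 1) div K = t" "(t * K + i - 1) mod K = i - 1"
    using assms by (simp_all add: add.commute)
  moreover have "K < t * K + i" using assms by (cases t) auto
  ultimately show ?thesis
    using assms by (auto simp: basket_coord_def)
qed

lemma basket_coord_nth_basket_path:
  assumes "K \<ge> 2" "(t, i) \<in> basket_coords K"
  shows "basket_coord K (basket_path K t ! i) = (t, i)"
proof -
  from assms consider "t = 0" "i = 0" | "t = 0" "i = K" | "t = 0" "0 < i" "i < K"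
    | "t \<in> {1, 2, 3}" "0 < i" "i \<le> K"
    by (fastforce simp: basket_coords_def)
  then show ?thesis
  proof cases
    case 4
    then show ?thesis by (auto simp: nth_basket_path basket_end_def basket_coord_mult_add)
  qed (use assms in \<open>auto simp: nth_basket_path basket_end_def basket_coord_def\<close>)
qed

lemma basket_coord_mem_and_path_nth:
  assumes "K \<ge> 2" "v < 4 * K + 1"
  shows "basket_coord K v \<in> basket_coords K \<and> (case basket_coord K v of (t, i) \<Rightarrow> basket_path K t ! i) = v"
proof -
  consider "v = 0" | "v = 1" | "1 < v" "v \<le> K" | "K < v" by linarith
  then show ?thesis
  proof cases
    case 4
    define t where "t = (v - 1) div K"
    define r where "r = (v - 1) mod K"
    have v: "v = t * K + Suc r" using 4 by (simp add: t_def r_def)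
    have "K div K \<le> t" unfolding t_def by (rule div_le_mono) (use 4 in simp)
    moreover have "t < 4" using 4 assms by (simp add: t_def div_less_iff_less_mult)
    ultimately have "t \<in> {1, 2, 3}" using assms by auto
    moreover have "r < K" using assms by (simp add: r_def)
    moreover have "basket_coord K v = (t, Suc r)"
      unfolding v using \<open>t \<in> {1, 2, 3}\<close> \<open>r < K\<close> by (intro basket_coord_mult_add) auto
    ultimately show ?thesis
      using assms by (auto simp: v basket_coords_def nth_basket_path basket_end_def)
  qed (use assms in \<open>auto simp: basket_coord_def basket_coords_def nth_basket_path basket_end_def\<close>)
qed

lemma bij_betw_basket_coord:
  assumes "K \<ge> 2"
  shows "bij_betw (basket_coord K) {..<4 * K + 1} (basket_coords K)"
proof (rule bij_betw_byWitness[where f' = "\<lambda>(t, i). basket_path K t ! i"])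
  have "basket_path K t ! i < 4 * K + 1" if "(t, i) \<in> basket_coords K" for t i
    using that assms by (auto simp: basket_coords_def nth_basket_path basket_end_def)
  then show "(\<lambda>(t, i). basket_path K t ! i) ` basket_coords K \<subseteq> {..<4 * K + 1}"
    by auto
qed (use assms basket_coord_mem_and_path_nth basket_coord_nth_basket_path in auto)

fun basket_dist :: "nat \<Rightarrow> nat \<times> nat \<Rightarrow> nat \<times> nat \<Rightarrow> nat" where
  "basket_dist K (p, i) (q, j) =
     (if p = q then absdiff i j else min (i + j) (basket_end K p - i + (basket_end K q - j)))"

lemma basket_dist_self [simp]: "basket_dist K u u = 0"
  by (cases u) (simp add: absdiff_def)

lemma basket_dist_Suc:
  assumes "i < basket_end K t"
  shows "basket_dist K u (t, Suc i) \<le> Suc (basket_dist K u (t, i))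
       \<and> basket_dist K u (t, i) \<le> Suc (basket_dist K u (t, Suc i))"
  using assms by (cases u) (auto simp: absdiff_def)

(* A hub has a copy on every path, and the formula gives the same distance to each copy as long as
   the first argument is in canonical form. *)
lemma basket_dist_coord_nth_basket_path:
  assumes "K \<ge> 2" "u \<in> basket_coords K" "t \<le> 3" "i \<le> basket_end K t"
  shows "basket_dist K u (basket_coord K (basket_path K t ! i)) = basket_dist K u (t, i)"
proof -
  consider "i = 0" | "i = basket_end K t" | "(t, i) \<in> basket_coords K"
    using assms(3,4) by (fastforce simp: basket_coords_def basket_end_def split: if_splits)
  then show ?thesis
  proof cases
    case 3
    then show ?thesis using assms(1) by (simp add: basket_coord_nth_basket_path)
  qed (use assms in \<open>cases u; auto simp: nth_basket_path basket_coord_def basket_coords_def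
                                              basket_end_def absdiff_def\<close>)+
qed

lemma basket_adj_relpowp_basket_dist:
  assumes "K \<ge> 1" "(p, i) \<in> basket_coords K" "(q, j) \<in> basket_coords K"
  shows "(basket_adj (Suc K) ^^ basket_dist K (p, i) (q, j)) (basket_path K p ! i) (basket_path K q ! j)"
proof -
  let ?E = "basket_adj (Suc K)" and ?e = "basket_end K"
  have walk: "(?E ^^ absdiff i' j') (basket_path K t ! i') (basket_path K t ! j')"
    if "t \<le> 3" "i' \<le> ?e t" "j' \<le> ?e t" for t i' j'
    using path_edges_adj_relpowp_nth[of "basket_path K t" "basket_paths (Suc K)" i' j'] that assms(1)
    by (simp add: basket_adj_def set_basket_paths length_basket_path)
  have ends: "basket_path K t ! 0 = 0" "basket_path K t ! ?e t = 1" for t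
    using assms(1) by (simp_all add: nth_basket_path basket_end_def)
  have pq: "p \<le> 3" "i \<le> ?e p" "q \<le> 3" "j \<le> ?e q"
    using assms(2,3) by (auto simp: basket_coords_def basket_end_def)
  show ?thesis
  proof (cases "p = q")
    case True
    then show ?thesis using walk[of p i j] pq by simp
  next
    case False
    have "(?E ^^ i OO ?E ^^ j) (basket_path K p ! i) (basket_path K q ! j)"
      using walk[of p i 0] walk[of q 0 j] pq ends by (auto simp: absdiff_def)
    moreover have "(?E ^^ (?e p - i) OO ?E ^^ (?e q - j)) (basket_path K p ! i) (basket_path K q ! j)"
      using walk[of p i "?e p"] walk[of q "?e q" j] pq ends by (auto simp: absdiff_def)
    ultimately show ?thesis using False by (simp add: min_def flip: relpowp_add)
  qed
qed

lemma graph_dist_basket_adj: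
  assumes "K \<ge> 2" "a < 4 * K + 1" "b < 4 * K + 1"
  shows "graph_dist (basket_adj (Suc K)) a b = basket_dist K (basket_coord K a) (basket_coord K b)"
proof -
  obtain p i where a: "basket_coord K a = (p, i)" by fastforce
  obtain q j where b: "basket_coord K b = (q, j)" by fastforce
  have u: "(p, i) \<in> basket_coords K" "basket_path K p ! i = a"
    using basket_coord_mem_and_path_nth[OF assms(1,2)] a by auto
  have v: "(q, j) \<in> basket_coords K" "basket_path K q ! j = b"
    using basket_coord_mem_and_path_nth[OF assms(1,3)] b by auto
  let ?f = "\<lambda>v. basket_dist K (p, i) (basket_coord K v)"
  have "graph_dist (basket_adj (Suc K)) a b = ?f b"
  proof (rule graph_dist_eqI)
    show "?f a = 0" using a by simp
    show "(basket_adj (Suc K) ^^ ?f b) a b"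
      using basket_adj_relpowp_basket_dist[of K p i q j] assms(1) u v b by simp
    fix y z
    assume "basket_adj (Suc K) y z"
    then obtain t n where t: "t \<le> 3" "Suc n < length (basket_path K t)"
      and yz: "(y = basket_path K t ! n \<and> z = basket_path K t ! Suc n)
             \<or> (y = basket_path K t ! Suc n \<and> z = basket_path K t ! n)"
      by (auto simp: basket_adj_def path_edges_adj_def set_basket_paths)
    then have "n < basket_end K t" using assms(1) by (simp add: length_basket_path)
    then show "?f z \<le> Suc (?f y)"
      using yz basket_dist_Suc[of n K t "(p, i)"] basket_dist_coord_nth_basket_path[OF assms(1) u(1) t(1)]
      by auto
  qed
  then show ?thesis using a b by simp
qed

fun basket_weight :: "nat \<Rightarrow> nat \<times> nat \<Rightarrow> real" where
  "basket_weight K (t, i) =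
     (if t = 0 then ((-3) ^ i + (-3) ^ (K - i)) / 2 else ((-3) ^ (i - 1) + (-3) ^ (K - i)) / 2)"

lemma sum_basket_coords:
  "(\<Sum>w\<in>basket_coords K. g w) = (\<Sum>i<Suc K. g (0, i)) + (\<Sum>t\<in>{1, 2, 3}. \<Sum>b<K. g (t, Suc b))"
proof -
  have "(\<Sum>w\<in>basket_coords K. g w) = (\<Sum>w\<in>{0} \<times> {..K}. g w) + (\<Sum>w\<in>{1, 2, 3} \<times> {1..K}. g w)"
    unfolding basket_coords_def by (rule sum.union_disjoint) auto
  also have "\<dots> = (\<Sum>i\<le>K. g (0, i)) + (\<Sum>t\<in>{1, 2, 3}. \<Sum>i\<in>{1..K}. g (t, i))"
    by (simp only: sum.cartesian_product') simp
  finally show ?thesis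
    by (simp add: lessThan_Suc_atMost sum.atLeast1_atMost_eq)
qed

lemma sum_basket_weight: "(\<Sum>w\<in>basket_coords K. basket_weight K w) = 1"
proof -
  have "(\<Sum>i<Suc K. basket_weight K (0, i)) = (\<Sum>b<Suc K. 1 * (((-3) ^ b + (-3) ^ (Suc K - Suc b)) / 2))"
    by simp
  also have "\<dots> = (\<Sum>b<Suc K. (-3::real) ^ b)"
    by (subst sum_mult_symmetrized_power[where g = "\<lambda>_. 1"]) simp_all
  finally have short: "(\<Sum>i<Suc K. basket_weight K (0, i)) = (1 - (-3) ^ Suc K) / 4"
    by (simp only: sum_neg3_power)
  have "(\<Sum>b<K. basket_weight K (t, Suc b)) = (\<Sum>b<K. 1 * (((-3) ^ b + (-3) ^ (K - Suc b)) / 2))"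
    if "t \<noteq> 0" for t
    using that by simp
  also have "\<dots> = (\<Sum>b<K. (-3::real) ^ b)"
    by (subst sum_mult_symmetrized_power[where g = "\<lambda>_. 1"]) simp_all
  finally have long: "(\<Sum>b<K. basket_weight K (t, Suc b)) = (1 - (-3) ^ K) / 4" if "t \<noteq> 0" for t
    using that by (simp only: sum_neg3_power)
  have "(\<Sum>t\<in>{1, 2, 3}. \<Sum>b<K. basket_weight K (t, Suc b)) = (\<Sum>t\<in>{1, 2, 3::nat}. (1 - (-3) ^ K) / 4)"
    by (intro sum.cong refl long) auto
  then show ?thesis
    unfolding sum_basket_coords short by (simp add: field_simps)
qed

lemma basket_row_short:
  assumes "c \<le> K"
  shows "(\<Sum>w\<in>basket_coords K. real (basket_dist K (0, c) w) * basket_weight K w)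
           = ((-3) ^ Suc K + 4 * real K + 3) / 8"
proof -
  have "(\<Sum>i<Suc K. real (basket_dist K (0, c) (0, i)) * basket_weight K (0, i))
      = (\<Sum>b<Suc K. real (absdiff c b) * (((-3) ^ b + (-3) ^ (Suc K - Suc b)) / 2))"
    by simp
  also have "\<dots> = (tent_sum (Suc K) c + tent_sum (Suc K) (K - c)) / 2"
    unfolding tent_sum_def
    by (rule sum_mult_symmetrized_power) (use assms in \<open>auto simp: absdiff_def\<close>)
  finally have short: "(\<Sum>i<Suc K. real (basket_dist K (0, c) (0, i)) * basket_weight K (0, i)) = \<dots>" .
  have "(\<Sum>b<K. real (basket_dist K (0, c) (t, Suc b)) * basket_weight K (t, Suc b))
      = (\<Sum>b<K. real (min (c + b + 1) (2 * K - c - b)) * (((-3) ^ b + (-3) ^ (K - Suc b)) / 2))"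
    if "t \<noteq> 0" for t
    using that assms by (intro sum.cong) (auto simp: basket_end_def min_def)
  also have "\<dots> = (roof_sum K K c 1 + roof_sum K K (K - c) 1) / 2"
    unfolding roof_sum_def
    by (rule sum_mult_symmetrized_power) (use assms in \<open>auto simp: min_def\<close>)
  finally have "(\<Sum>b<K. real (basket_dist K (0, c) (t, Suc b)) * basket_weight K (t, Suc b)) = \<dots>"
    if "t \<noteq> 0" for t
    using that by blast
  then have long: "(\<Sum>t\<in>{1, 2, 3}. \<Sum>b<K. real (basket_dist K (0, c) (t, Suc b)) * basket_weight K (t, Suc b))
      = 3 * ((roof_sum K K c 1 + roof_sum K K (K - c) 1) / 2)"
    by simp
  show ?thesis
    unfolding sum_basket_coords short long
    using assms by (simp add: tent_sum_eq roof_sum_eq of_nat_diff field_simps)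
qed

lemma basket_row_long:
  assumes "t \<in> {1, 2, 3}" "c < K"
  shows "(\<Sum>w\<in>basket_coords K. real (basket_dist K (t, Suc c) w) * basket_weight K w)
           = ((-3) ^ Suc K + 4 * real K + 3) / 8"
proof -
  have "(\<Sum>i<Suc K. real (basket_dist K (t, Suc c) (0, i)) * basket_weight K (0, i))
      = (\<Sum>b<Suc K. real (min (c + b + 1) (2 * K - c - b)) * (((-3) ^ b + (-3) ^ (Suc K - Suc b)) / 2))"
    using assms by (intro sum.cong) (auto simp: basket_end_def min_def)
  also have "\<dots> = (roof_sum K (Suc K) c 1 + roof_sum K (Suc K) (K - 1 - c) 1) / 2"
    unfolding roof_sum_def
    by (rule sum_mult_symmetrized_power) (use assms in \<open>auto simp: min_def\<close>)
  finally have short: "(\<Sum>i<Suc K. real (basket_dist K (t, Suc c) (0, i)) * basket_weight K (0, i)) = \<dots>" .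
  define F where "F t' = (\<Sum>b<K. real (basket_dist K (t, Suc c) (t', Suc b)) * basket_weight K (t', Suc b))"
    for t'
  have "F t = (\<Sum>b<K. real (absdiff c b) * (((-3) ^ b + (-3) ^ (K - Suc b)) / 2))"
    unfolding F_def using assms by (intro sum.cong) (auto simp: absdiff_def)
  also have "\<dots> = (tent_sum K c + tent_sum K (K - 1 - c)) / 2"
    unfolding tent_sum_def
    by (rule sum_mult_symmetrized_power) (use assms in \<open>auto simp: absdiff_def\<close>)
  finally have same: "F t = \<dots>" .
  have "F t' = (\<Sum>b<K. real (min (c + b + 2) (2 * K - c - b)) * (((-3) ^ b + (-3) ^ (K - Suc b)) / 2))"
    if "t' \<noteq> t" "t' \<noteq> 0" for t'
    unfolding F_def using that assms by (intro sum.cong) (auto simp: basket_end_def min_def)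
  also have "\<dots> = (roof_sum K K c 2 + roof_sum K K (K - 1 - c) 2) / 2"
    unfolding roof_sum_def
    by (rule sum_mult_symmetrized_power) (use assms in \<open>auto simp: min_def\<close>)
  finally have other: "F t' = \<dots>" if "t' \<noteq> t" "t' \<noteq> 0" for t'
    using that by blast
  have long: "(\<Sum>t'\<in>{1, 2, 3}. F t')
      = (tent_sum K c + tent_sum K (K - 1 - c)) / 2 + 2 * ((roof_sum K K c 2 + roof_sum K K (K - 1 - c) 2) / 2)"
    using assms(1) same other[of 1] other[of 2] other[of 3] by (auto simp: field_simps)
  have "K - c = Suc (K - 1 - c)" "K - (K - 1 - c) = Suc c"
    using assms(2) by simp_all
  then show ?thesis
    unfolding sum_basket_coords short F_def[symmetric] long
    using assms(2) by (simp add: tent_sum_eq roof_sum_eq of_nat_diff field_simps)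
qed

lemma basket_row:
  assumes "u \<in> basket_coords K"
  shows "(\<Sum>w\<in>basket_coords K. real (basket_dist K u w) * basket_weight K w)
           = ((-3) ^ Suc K + 4 * real K + 3) / 8"
proof -
  obtain t i where u: "u = (t, i)" by fastforce
  show ?thesis
  proof (cases "t = 0")
    case True
    then show ?thesis using assms u basket_row_short by (auto simp: basket_coords_def)
  next
    case False
    then have "t \<in> {1, 2, 3}" "i - 1 < K" "i = Suc (i - 1)" using assms u by (auto simp: basket_coords_def)
    then show ?thesis using u basket_row_long[of t "i - 1" K] by simp
  qed
qed

theorem lemma2p2:
  fixes k :: nat
  assumes "k \<ge> 3"
  shows "\<exists>x :: nat \<Rightarrow> real.
           (\<Sum>j<basket_n k. x j) = 1 \<and>
           (\<forall>i<basket_n k. (\<Sum>j<basket_n k. basket_D k i j * x j)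
                = ((-3::real)^k + 4 * real k - 1) / 8)"
proof -
  define K where "K = k - 1"
  have k: "k = Suc K" and K: "K \<ge> 2" and n: "basket_n k = 4 * K + 1"
    using assms by (simp_all add: K_def basket_n_def)
  have reindex: "(\<Sum>v<basket_n k. g (basket_coord K v)) = (\<Sum>w\<in>basket_coords K. g w)" for g :: "_ \<Rightarrow> real"
    unfolding n by (rule sum.reindex_bij_betw[OF bij_betw_basket_coord[OF K]])
  define x where "x v = basket_weight K (basket_coord K v)" for v
  have "(\<Sum>j<basket_n k. basket_D k i j * x j) = ((-3::real)^k + 4 * real k - 1) / 8"
    if i: "i < basket_n k" for i
  proof -
    have "(\<Sum>j<basket_n k. basket_D k i j * x j)
        = (\<Sum>j<basket_n k. real (basket_dist K (basket_coord K i) (basket_coord K j)) * x j)"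
      using i n K by (intro sum.cong) (simp_all add: basket_D_def k graph_dist_basket_adj)
    also have "\<dots> = (\<Sum>w\<in>basket_coords K. real (basket_dist K (basket_coord K i) w) * basket_weight K w)"
      unfolding x_def by (rule reindex)
    also have "\<dots> = ((-3) ^ Suc K + 4 * real K + 3) / 8"
      using basket_coord_mem_and_path_nth[OF K, of i] i n by (simp add: basket_row)
    finally show ?thesis by (simp add: k)
  qed
  moreover have "(\<Sum>j<basket_n k. x j) = 1"
    unfolding x_def reindex by (rule sum_basket_weight)
  ultimately show ?thesis by blast
qed

end
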